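(* There exists a two-way optical interference automaton (2OIA) that recognizes the language $L_{centre}=\{w_1 a w_2 \mid w_1,w_2\in\{a,b\}^*,\ |w_1|=|w_2|\}$ in time linear in the length of the input string.
   Context: A two-way optical interference automaton (2OIA) is a deterministic machine with finite state set $Q$, start state $q_0$, accepting and rejecting states, finite input alphabet $\Sigma$, and tape alphabet $\Gamma=\Sigma\cup\{\text{¢},\$\}$. On input $w=w_1\cdots w_n$ the read-only tape holds ¢$w_1\cdots w_n\$$ in cells $0,1,\dots,n+1$, scanned by a two-way head. For each cell $m$ there is a monochromatic point light source at the point $(m,0)$ of the plane; all sources have the same wavelength $\lambda$ and the same initial amplitude $A_0$, and each source is at any moment either switched off or switched on with initial phase $0$ or $\pi$. A detector is located at a grid point $(j,k)$ with $j,k\in\{0,\tfrac12,1,\tfrac32,\dots,n+1\}$, pointing towards the source array; its field of vision is the cone making angle $\pi/4$ with the vertical line through it, so it sees exactly the sources at $(m,0)$ with $|m-j|\le k$. The resultant wave at the detector is $\sum A_0 r_m^{-1}e^{i(\phi_m+2\pi r_m/\lambda)}$, summed over the switched-on sources it sees, where $r_m$ is the distance from the source to the detector and $\phi_m\in\{0,\pi\}$ the source's phase; the detector outputs $\underline{1}$ if this resultant (equivalently the intensity) is nonzero and $\underline{0}$ otherwise. The transition function $\delta:Q\times\Gamma\times\{\underline0,\underline1\}\to Q\times\{\text{left},\text{right},\text{stay}\}\times\{\text{left},\text{right},\text{up},\text{down},\text{stay}\}\times\{\mathrm{toggle}(0),\mathrm{toggle}(\pi),-\}$ maps (state, scanned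 symbol, detector output) to a new state, a move of the head by one cell, a move of the detector by one grid step (of length $1/2$), and an action on the source of the currently scanned cell: $\mathrm{toggle}(\phi)$ switches it on with phase $\phi$ if it is off and switches it off if it is on; $-$ does nothing. Initially all sources are off, the machine is in $q_0$, the head is on cell $0$, and the detector is at a prescribed initial grid position. For a given source, a maximal sequence of toggles at consecutive time steps is called non-transient if its length is odd; there is a constant $k$ such that the machine crashes if it attempts a non-transient toggle sequence on a single source for the $(k+1)$-th time. The machine accepts when it is in an accepting state with detector output $\underline0$. Its running time is the total number of moves made by the head plus the number of moves made by the detector. A 2OIA recognizes a language $L$ if it accepts every input in $L$ and rejects every input not in $L$. *)

theory Defs
  imports Complex_Main
begin

datatype 'x tsym = LEnd | REnd | Sym 'x

datatype hmove = HLeft | HRight | HStay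
datatype dmove = DLeft | DRight | DUp | DDown | DStay
datatype action = Toggle0 | TogglePi | NoAct
datatype srcst = Off | On0 | OnPi

text \<open>Detector coordinates are stored doubled: a grid point (j,k), with j,k in
  {0,1/2,...,n+1}, is represented by the naturals (2j,2k) in {0..2n+2}.\<close>
record 'x oia =
  oia_states :: "nat set"
  oia_start :: nat
  oia_acc :: "nat set"
  oia_rej :: "nat set"
  oia_delta :: "nat \<Rightarrow> 'x tsym \<Rightarrow> bool \<Rightarrow> nat \<times> hmove \<times> dmove \<times> action"
  oia_alpha_j :: nat
  oia_beta_j :: int
  oia_alpha_k :: nat
  oia_beta_k :: int
  oia_lambda :: real
  oia_amp :: real
  oia_kbound :: nat

definition init_J :: "'x oia \<Rightarrow> nat \<Rightarrow> int" where
  "init_J M n = int (oia_alpha_j M * (n + 1)) + oia_beta_j M"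

definition init_K :: "'x oia \<Rightarrow> nat \<Rightarrow> int" where
  "init_K M n = int (oia_alpha_k M * (n + 1)) + oia_beta_k M"

definition wf_oia :: "'x oia \<Rightarrow> bool" where
  "wf_oia M \<longleftrightarrow>
     finite (oia_states M) \<and> oia_start M \<in> oia_states M \<and>
     oia_acc M \<subseteq> oia_states M \<and> oia_rej M \<subseteq> oia_states M \<and>
     oia_acc M \<inter> oia_rej M = {} \<and>
     (\<forall>q \<in> oia_states M. \<forall>s o'. fst (oia_delta M q s o') \<in> oia_states M) \<and>
     oia_lambda M > 0 \<and> oia_amp M > 0 \<and>
     oia_alpha_j M \<le> 2 \<and> oia_alpha_k M \<le> 2 \<and>
     (\<forall>n. 0 \<le> init_J M n \<and> init_J M n \<le> 2 * int n + 2 \<and>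
          0 \<le> init_K M n \<and> init_K M n \<le> 2 * int n + 2)"

definition tape :: "'x list \<Rightarrow> nat \<Rightarrow> 'x tsym" where
  "tape w i = (if i = 0 then LEnd else if i \<le> length w then Sym (w ! (i - 1)) else REnd)"

definition src_phase :: "srcst \<Rightarrow> real" where
  "src_phase s = (if s = OnPi then pi else 0)"

text \<open>Distance from the source at (m,0) to the detector at (J/2, K/2).\<close>
definition src_dist :: "nat \<Rightarrow> nat \<Rightarrow> nat \<Rightarrow> real" where
  "src_dist m J K = sqrt ((real m - real J / 2)\<^sup>2 + (real K / 2)\<^sup>2)"

text \<open>Sources on the tape that are switched on and within the detector's field of vision
  (|m - j| \<le> k).\<close>
definition seen :: "nat \<Rightarrow> (nat \<Rightarrow> srcst) \<Rightarrow> nat \<Rightarrow> nat \<Rightarrow> nat set" where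
  "seen n s J K = {m. m \<le> n + 1 \<and> s m \<noteq> Off \<and> \<bar>2 * int m - int J\<bar> \<le> int K}"

definition resultant :: "'x oia \<Rightarrow> nat \<Rightarrow> (nat \<Rightarrow> srcst) \<Rightarrow> nat \<Rightarrow> nat \<Rightarrow> complex" where
  "resultant M n s J K =
     (\<Sum>m \<in> seen n s J K.
        complex_of_real (oia_amp M / src_dist m J K) *
        cis (src_phase (s m) + 2 * pi * src_dist m J K / oia_lambda M))"

text \<open>Detector output (True = 1, False = 0). A switched-on source located exactly at the
  detector (distance 0) gives an unbounded, hence nonzero, field.\<close>
definition det_out :: "'x oia \<Rightarrow> nat \<Rightarrow> (nat \<Rightarrow> srcst) \<Rightarrow> nat \<Rightarrow> nat \<Rightarrow> bool" where
  "det_out M n s J K \<longleftrightarrow>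
     (\<exists>m \<in> seen n s J K. src_dist m J K = 0) \<or> resultant M n s J K \<noteq> 0"

record config =
  c_state :: nat
  c_head :: nat
  c_J :: nat
  c_K :: nat
  c_src :: "nat \<Rightarrow> srcst"
  c_cnt :: "nat \<Rightarrow> nat"            \<comment> \<open>number of completed non-transient toggle sequences per source\<close>
  c_run :: "(nat \<times> nat) option"    \<comment> \<open>toggle sequence in progress: (source, length so far)\<close>
  c_time :: nat                    \<comment> \<open>head moves plus detector moves so far\<close>

text \<open>End the current toggle sequence; None = crash (the (k+1)-th non-transient sequence).\<close>
definition close_run :: "nat \<Rightarrow> (nat \<Rightarrow> nat) \<Rightarrow> (nat \<times> nat) option \<Rightarrow> (nat \<Rightarrow> nat) option" where
  "close_run k cnt r = (case r of None \<Rightarrow> Some cnt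
     | Some (m, l) \<Rightarrow> if odd l then (if cnt m + 1 > k then None else Some (cnt(m := cnt m + 1)))
                      else Some cnt)"

definition apply_act :: "action \<Rightarrow> srcst \<Rightarrow> srcst" where
  "apply_act a s = (case a of NoAct \<Rightarrow> s
     | Toggle0 \<Rightarrow> (if s = Off then On0 else Off)
     | TogglePi \<Rightarrow> (if s = Off then OnPi else Off))"

definition move_head :: "nat \<Rightarrow> hmove \<Rightarrow> nat \<Rightarrow> nat option" where
  "move_head n d h = (case d of HStay \<Rightarrow> Some h
     | HLeft \<Rightarrow> (if h = 0 then None else Some (h - 1))
     | HRight \<Rightarrow> (if h < n + 1 then Some (h + 1) else None))"

definition move_det :: "nat \<Rightarrow> dmove \<Rightarrow> nat \<times> nat \<Rightarrow> (nat \<times> nat) option" where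
  "move_det n d p = (case p of (J, K) \<Rightarrow> (case d of DStay \<Rightarrow> Some (J, K)
     | DLeft \<Rightarrow> (if J = 0 then None else Some (J - 1, K))
     | DRight \<Rightarrow> (if J < 2 * n + 2 then Some (J + 1, K) else None)
     | DDown \<Rightarrow> (if K = 0 then None else Some (J, K - 1))
     | DUp \<Rightarrow> (if K < 2 * n + 2 then Some (J, K + 1) else None)))"

definition det_output :: "'x oia \<Rightarrow> 'x list \<Rightarrow> config \<Rightarrow> bool" where
  "det_output M w c = det_out M (length w) (c_src c) (c_J c) (c_K c)"

definition halted :: "'x oia \<Rightarrow> config \<Rightarrow> bool" where
  "halted M c \<longleftrightarrow> c_state c \<in> oia_acc M \<union> oia_rej M"

text \<open>One step; None means the machine crashes.\<close>
definition step :: "'x oia \<Rightarrow> 'x list \<Rightarrow> config \<Rightarrow> config option" where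
  "step M w c =
    (let n = length w; h = c_head c;
         (q', hm, dm, ac) = oia_delta M (c_state c) (tape w h) (det_output M w c);
         s' = (c_src c)(h := apply_act ac (c_src c h));
         rc = (if ac = NoAct then (close_run (oia_kbound M) (c_cnt c) (c_run c), None)
               else (case c_run c of
                       Some (m, l) \<Rightarrow> if m = h then (Some (c_cnt c), Some (h, l + 1))
                                      else (close_run (oia_kbound M) (c_cnt c) (c_run c), Some (h, 1))
                     | None \<Rightarrow> (Some (c_cnt c), Some (h, 1))))
     in case (fst rc, move_head n hm h, move_det n dm (c_J c, c_K c)) of
          (Some cnt', Some h', Some (J', K')) \<Rightarrow>
            Some \<lparr> c_state = q', c_head = h', c_J = J', c_K = K', c_src = s',
                   c_cnt = cnt', c_run = snd rc,
                   c_time = c_time c + (if hm = HStay then 0 else 1) + (if dm = DStay then 0 else 1) \<rparr>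
        | _ \<Rightarrow> None)"

definition init_config :: "'x oia \<Rightarrow> 'x list \<Rightarrow> config" where
  "init_config M w = \<lparr> c_state = oia_start M, c_head = 0,
     c_J = nat (init_J M (length w)), c_K = nat (init_K M (length w)),
     c_src = (\<lambda>_. Off), c_cnt = (\<lambda>_. 0), c_run = None, c_time = 0 \<rparr>"

fun comp :: "'x oia \<Rightarrow> 'x list \<Rightarrow> nat \<Rightarrow> config option" where
  "comp M w 0 = Some (init_config M w)"
| "comp M w (Suc t) = (case comp M w t of None \<Rightarrow> None
     | Some c \<Rightarrow> if halted M c then Some c else step M w c)"

definition halts_in :: "'x oia \<Rightarrow> 'x list \<Rightarrow> config \<Rightarrow> bool" where
  "halts_in M w c \<longleftrightarrow> (\<exists>t. comp M w t = Some c) \<and> halted M c \<and>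
     close_run (oia_kbound M) (c_cnt c) (c_run c) \<noteq> None"

definition accepts :: "'x oia \<Rightarrow> 'x list \<Rightarrow> bool" where
  "accepts M w \<longleftrightarrow> (\<exists>c. halts_in M w c \<and> c_state c \<in> oia_acc M \<and> \<not> det_output M w c)"

definition rejects :: "'x oia \<Rightarrow> 'x list \<Rightarrow> bool" where
  "rejects M w \<longleftrightarrow> (\<exists>c. halts_in M w c \<and> \<not> (c_state c \<in> oia_acc M \<and> \<not> det_output M w c))"

definition recognizes :: "'x oia \<Rightarrow> 'x list set \<Rightarrow> bool" where
  "recognizes M L \<longleftrightarrow> (\<forall>w. (w \<in> L \<longrightarrow> accepts M w) \<and> (w \<notin> L \<longrightarrow> rejects M w))"

definition linear_time :: "'x oia \<Rightarrow> bool" where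
  "linear_time M \<longleftrightarrow> (\<exists>c d::nat. \<forall>w cf. halts_in M w cf \<longrightarrow> c_time cf \<le> c * length w + d)"

datatype ab = A | B

definition L_centre :: "ab list set" where
  "L_centre = {w1 @ [A] @ w2 | w1 w2. length w1 = length w2}"

end

theory Submission
  imports Defs
begin

text \<open>While the head scans the tape from left to right, the detector moves along the source
  line in half-steps, so when the head reaches the right end marker (cell n+1) the detector is at
  the point ((n+1)/2, 0). With height k = 0 it sees only a source lit exactly there, at distance 0,
  i.e. the centre cell, which exists iff n is odd. The head then walks back to the left, lighting
  each cell's source for one step; the detector fires exactly at the centre cell, where the
  machine accepts iff that cell holds a. Each source is switched on and off again in two
  consecutive steps, so all toggle sequences are transient and the bound k = 0 suffices.\<close>

lemma comp_Suc_step: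
  assumes "comp M w t = Some c" and "\<not> halted M c" and "step M w c = Some c'"
  shows "comp M w (Suc t) = Some c'"
  using assms by simp

lemma comp_halted_stays:
  assumes "comp M w t = Some c" and "halted M c"
  shows "comp M w (t + k) = Some c"
  using assms by (induction k) auto

lemma comp_halted_unique:
  assumes "comp M w t = Some c" and "halted M c"
    and "comp M w t' = Some c'" and "halted M c'"
  shows "c' = c"
proof (cases "t \<le> t'")
  case True
  then show ?thesis
    using comp_halted_stays[OF assms(1,2), of "t' - t"] assms(3) by simp
next
  case False
  then show ?thesis
    using comp_halted_stays[OF assms(3,4), of "t - t'"] assms(1) by simp
qed

lemma halts_in_iff_reached:
  assumes "comp M w t = Some c" and "halted M c"
  shows "halts_in M w c' \<longleftrightarrow> c' = c \<and> close_run (oia_kbound M) (c_cnt c) (c_run c) \<noteq> None"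
  using assms comp_halted_unique[OF assms] unfolding halts_in_def by blast

lemma recognizes_linear_time_if_halts:
  assumes "\<And>w. \<exists>t c. comp M w t = Some c \<and> halted M c
      \<and> close_run (oia_kbound M) (c_cnt c) (c_run c) \<noteq> None
      \<and> (w \<in> L \<longleftrightarrow> c_state c \<in> oia_acc M \<and> \<not> det_output M w c)
      \<and> c_time c \<le> a * length w + b"
  shows "recognizes M L \<and> linear_time M"
proof
  show "recognizes M L"
    unfolding recognizes_def accepts_def rejects_def
    using assms halts_in_iff_reached by metis
  show "linear_time M"
    unfolding linear_time_def
    using assms halts_in_iff_reached by metis
qed

lemma det_out_all_off: "\<not> det_out M n (\<lambda>_. Off) J K"
  by (simp add: det_out_def seen_def resultant_def)

lemma seen_single_source_on_line:
  assumes "h \<le> n + 1" and "s \<noteq> Off"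
  shows "seen n ((\<lambda>_. Off)(h := s)) J 0 = (if 2 * h = J then {h} else {})"
  using assms by (auto simp add: seen_def)

lemma det_out_single_source_on_line:
  assumes "h \<le> n + 1" and "s \<noteq> Off"
  shows "det_out M n ((\<lambda>_. Off)(h := s)) J 0 \<longleftrightarrow> 2 * h = J"
  using assms by (auto simp add: det_out_def seen_single_source_on_line resultant_def src_dist_def)

text \<open>States: 0 scans right, 1 probes the lit cell under the head, 2 lights the next cell to
  the left, 3 accepts, 4 rejects.\<close>
definition centre_delta :: "nat \<Rightarrow> ab tsym \<Rightarrow> bool \<Rightarrow> nat \<times> hmove \<times> dmove \<times> action" where
  "centre_delta q s o' =
    (if q = 0 then (if s = REnd then (1, HStay, DStay, Toggle0) else (0, HRight, DRight, NoAct))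
     else if q = 1 then
       (if o' then (if s = Sym A then 3 else 4, HStay, DStay, Toggle0)
        else if s = LEnd then (4, HStay, DStay, Toggle0)
        else (2, HLeft, DStay, Toggle0))
     else if q = 2 then (1, HStay, DStay, Toggle0)
     else (4, HStay, DStay, NoAct))"

definition centre_oia :: "ab oia" where
  "centre_oia = \<lparr> oia_states = {0, 1, 2, 3, 4}, oia_start = 0, oia_acc = {3}, oia_rej = {4},
     oia_delta = centre_delta, oia_alpha_j = 0, oia_beta_j = 0, oia_alpha_k = 0, oia_beta_k = 0,
     oia_lambda = 1, oia_amp = 1, oia_kbound = 0 \<rparr>"

lemma wf_centre_oia: "wf_oia centre_oia"
  by (simp add: wf_oia_def centre_oia_def init_J_def init_K_def centre_delta_def)

definition scan_cfg :: "nat \<Rightarrow> config" where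
  "scan_cfg i = \<lparr> c_state = 0, c_head = i, c_J = i, c_K = 0, c_src = (\<lambda>_. Off),
     c_cnt = (\<lambda>_. 0), c_run = None, c_time = 2 * i \<rparr>"

definition probe_cfg :: "nat \<Rightarrow> nat \<Rightarrow> config" where
  "probe_cfg n h = \<lparr> c_state = 1, c_head = h, c_J = n + 1, c_K = 0,
     c_src = (\<lambda>_. Off)(h := On0), c_cnt = (\<lambda>_. 0), c_run = Some (h, 1),
     c_time = 2 * (n + 1) + (n + 1 - h) \<rparr>"

definition shift_cfg :: "nat \<Rightarrow> nat \<Rightarrow> config" where
  "shift_cfg n h = \<lparr> c_state = 2, c_head = h, c_J = n + 1, c_K = 0, c_src = (\<lambda>_. Off),
     c_cnt = (\<lambda>_. 0), c_run = Some (Suc h, 2), c_time = 2 * (n + 1) + (n + 1 - h) \<rparr>"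

definition final_cfg :: "nat \<Rightarrow> nat \<Rightarrow> nat \<Rightarrow> config" where
  "final_cfg q n h = \<lparr> c_state = q, c_head = h, c_J = n + 1, c_K = 0, c_src = (\<lambda>_. Off),
     c_cnt = (\<lambda>_. 0), c_run = Some (h, 2), c_time = 2 * (n + 1) + (n + 1 - h) \<rparr>"

lemma halted_centre_oia_iff: "halted centre_oia c \<longleftrightarrow> c_state c = 3 \<or> c_state c = 4"
  by (auto simp add: halted_def centre_oia_def)

lemmas centre_step_simps = step_def Let_def halted_def centre_oia_def centre_delta_def
  det_output_def det_out_all_off det_out_single_source_on_line close_run_def
  move_head_def move_det_def apply_act_def tape_def

lemma centre_oia_scans:
  assumes "i \<le> length w + 1"
  shows "comp centre_oia w i = Some (scan_cfg i)"
  using assms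
proof (induction i)
  case 0
  then show ?case
    by (simp add: init_config_def scan_cfg_def centre_oia_def init_J_def init_K_def)
next
  case (Suc i)
  then have "tape w i \<noteq> REnd"
    by (simp add: tape_def)
  with Suc show ?case
    by (simp add: scan_cfg_def centre_step_simps fun_upd_idem_iff)
qed

lemma centre_oia_turns:
  "step centre_oia w (scan_cfg (length w + 1)) = Some (probe_cfg (length w) (length w + 1))"
  by (simp add: scan_cfg_def probe_cfg_def centre_step_simps fun_eq_iff)

lemma centre_oia_probe_off_centre:
  assumes "0 < h" and "h \<le> length w + 1" and "2 * h \<noteq> length w + 1"
  shows "step centre_oia w (probe_cfg (length w) h) = Some (shift_cfg (length w) (h - 1))"
  using assms by (simp add: probe_cfg_def shift_cfg_def centre_step_simps fun_eq_iff)

lemma centre_oia_shift: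
  assumes "h < length w + 1"
  shows "step centre_oia w (shift_cfg (length w) h) = Some (probe_cfg (length w) h)"
  using assms by (simp add: probe_cfg_def shift_cfg_def centre_step_simps fun_eq_iff)

lemma centre_oia_probe_centre:
  assumes "2 * h = length w + 1"
  shows "step centre_oia w (probe_cfg (length w) h)
    = Some (final_cfg (if w ! (h - 1) = A then 3 else 4) (length w) h)"
  using assms by (simp add: probe_cfg_def final_cfg_def centre_step_simps fun_eq_iff)

lemma centre_oia_probe_left_end:
  "step centre_oia w (probe_cfg (length w) 0) = Some (final_cfg 4 (length w) 0)"
  by (simp add: probe_cfg_def final_cfg_def centre_step_simps fun_eq_iff)

lemma centre_oia_probes:
  assumes "h \<le> length w + 1" and "\<forall>h'. h < h' \<longrightarrow> 2 * h' \<noteq> length w + 1"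
  shows "comp centre_oia w (3 * length w + 4 - 2 * h) = Some (probe_cfg (length w) h)"
  using assms
proof (induction h rule: inc_induct)
  case base
  have "comp centre_oia w (Suc (length w + 1)) = Some (probe_cfg (length w) (length w + 1))"
    by (rule comp_Suc_step[OF centre_oia_scans[OF order_refl] _ centre_oia_turns])
      (simp add: halted_centre_oia_iff scan_cfg_def)
  then show ?case
    by (simp add: numeral_eq_Suc)
next
  case (step h)
  let ?n = "length w"
  have probe: "comp centre_oia w (3 * ?n + 4 - 2 * Suc h) = Some (probe_cfg ?n (Suc h))"
    using step by simp
  have "2 * Suc h \<noteq> ?n + 1"
    using spec[OF step.prems, of "Suc h"] by simp
  then have off_centre: "step centre_oia w (probe_cfg ?n (Suc h)) = Some (shift_cfg ?n h)"
    using centre_oia_probe_off_centre[of "Suc h" w] step.hyps by simp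
  have shift: "comp centre_oia w (Suc (3 * ?n + 4 - 2 * Suc h)) = Some (shift_cfg ?n h)"
    by (rule comp_Suc_step[OF probe _ off_centre]) (simp add: halted_centre_oia_iff probe_cfg_def)
  have probe': "comp centre_oia w (Suc (Suc (3 * ?n + 4 - 2 * Suc h))) = Some (probe_cfg ?n h)"
    by (rule comp_Suc_step[OF shift _ centre_oia_shift])
      (use step in \<open>simp_all add: halted_centre_oia_iff shift_cfg_def\<close>)
  have "Suc (Suc (3 * ?n + 4 - 2 * Suc h)) = 3 * ?n + 4 - 2 * h"
    using step by simp
  then show ?case
    using probe' by metis
qed

lemma L_centre_iff: "w \<in> L_centre \<longleftrightarrow> odd (length w) \<and> w ! (length w div 2) = A"
proof
  assume "w \<in> L_centre"
  then obtain w1 w2 where "w = w1 @ [A] @ w2" and "length w1 = length w2"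
    by (auto simp: L_centre_def)
  then show "odd (length w) \<and> w ! (length w div 2) = A"
    by (simp add: nth_append)
next
  assume centre: "odd (length w) \<and> w ! (length w div 2) = A"
  define m where "m = length w div 2"
  have "m < length w" and length_w: "length w = 2 * m + 1" and "w ! m = A"
    using centre by (auto simp: m_def elim!: oddE)
  then have "w = take m w @ [A] @ drop (Suc m) w"
    by (metis id_take_nth_drop append_Cons append_Nil)
  moreover have "length (take m w) = length (drop (Suc m) w)"
    using length_w by simp
  ultimately show "w \<in> L_centre"
    unfolding L_centre_def by blast
qed

lemma centre_oia_decides:
  "\<exists>t q h. comp centre_oia w t = Some (final_cfg q (length w) h) \<and> (q = 3 \<or> q = 4)
     \<and> (w \<in> L_centre \<longleftrightarrow> q = 3)"
proof (cases "odd (length w)")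
  case True
  define h where "h = (length w + 1) div 2"
  have centre: "2 * h = length w + 1"
    using True by (auto simp: h_def elim!: oddE)
  then have "comp centre_oia w (3 * length w + 4 - 2 * h) = Some (probe_cfg (length w) h)"
    by (intro centre_oia_probes) auto
  then have reach: "comp centre_oia w (Suc (3 * length w + 4 - 2 * h))
      = Some (final_cfg (if w ! (h - 1) = A then 3 else 4) (length w) h)"
    by (rule comp_Suc_step[OF _ _ centre_oia_probe_centre[OF centre]])
      (simp add: halted_centre_oia_iff probe_cfg_def)
  have "h - 1 = length w div 2"
    using True by (auto simp: h_def elim!: oddE)
  then have decided: "w \<in> L_centre \<longleftrightarrow> w ! (h - 1) = A"
    using True by (simp add: L_centre_iff)
  show ?thesis
    by (intro exI conjI, rule reach) (simp_all add: decided)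
next
  case False
  then have "\<forall>h'. 0 < h' \<longrightarrow> 2 * h' \<noteq> length w + 1"
    by presburger
  then have "comp centre_oia w (3 * length w + 4) = Some (probe_cfg (length w) 0)"
    using centre_oia_probes[of 0 w] by simp
  then have reach: "comp centre_oia w (Suc (3 * length w + 4)) = Some (final_cfg 4 (length w) 0)"
    by (rule comp_Suc_step[OF _ _ centre_oia_probe_left_end])
      (simp add: halted_centre_oia_iff probe_cfg_def)
  have rejected: "w \<notin> L_centre"
    using False by (simp add: L_centre_iff)
  show ?thesis
    by (intro exI conjI, rule reach) (simp_all add: rejected)
qed

lemma centre_oia_halts_deciding:
  "\<exists>t c. comp centre_oia w t = Some c \<and> halted centre_oia c
      \<and> close_run (oia_kbound centre_oia) (c_cnt c) (c_run c) \<noteq> None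
      \<and> (w \<in> L_centre \<longleftrightarrow> c_state c \<in> oia_acc centre_oia \<and> \<not> det_output centre_oia w c)
      \<and> c_time c \<le> 3 * length w + 3"
proof -
  obtain t q h where "comp centre_oia w t = Some (final_cfg q (length w) h)"
    and "q = 3 \<or> q = 4" and "w \<in> L_centre \<longleftrightarrow> q = 3"
    using centre_oia_decides by blast
  then show ?thesis
    by (intro exI[of _ t] exI[of _ "final_cfg q (length w) h"])
      (auto simp: final_cfg_def halted_def centre_oia_def close_run_def
        det_output_def det_out_all_off)
qed

theorem theorem1:
  shows "\<exists>M :: ab oia. wf_oia M \<and> recognizes M L_centre \<and> linear_time M"
proof -
  have "recognizes centre_oia L_centre \<and> linear_time centre_oia"
    by (rule recognizes_linear_time_if_halts[OF centre_oia_halts_deciding])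
  with wf_centre_oia show ?thesis
    by blast
qed

end
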